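(* Let $\mathbb{F}$ be a field of characteristic $p>0$. Let $P(t,y),Q(t,y)\in\mathbb{F}[[t,y]]$ and $\varphi(t)\in\mathbb{F}[[t]]$ satisfy $P(t,y)=(y-\varphi(t))^{p^{\ell}e}\cdot Q(t,y)$ with $\ell\ge0$, $e\ge1$, $\gcd(p,e)=1$, $\varphi(0)=0$ and $Q(0,0)=\alpha\neq0$. Then $$\varphi(t)^{p^{\ell}}=\sum_{m\ge0}[y^{p^{\ell}(e(m+1)-2)}]\left(\frac{\mathcal{H}^{(p^{\ell})}_y(P)(t,y)}{e\cdot\alpha^{m+1}}\big(\alpha y^{p^{\ell}e}-P(t,y)\big)^m\right).$$ Moreover, for every $d\ge0$, $$\mathrm{Hom}_{\le d}\big[\varphi(t)^{p^{\ell}}\big]=\mathrm{Hom}_{\le d}\left[\sum_{m=0}^{2e(d+p^{\ell})}[y^{p^{\ell}(e(m+1)-2)}]\left(\frac{\mathcal{H}^{(p^{\ell})}_y(P)(t,y)}{e\cdot\alpha^{m+1}}\big(\alpha y^{p^{\ell}e}-P(t,y)\big)^m\right)\right].$$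
   Context: $\mathcal{H}^{(i)}_y(F)$, the Hasse derivative of order $i$ with respect to $y$, is the coefficient of $z^i$ in $F(t,y+z)$. For $G\in\mathbb{F}[[t,y]]$, $[y^a](G)\in\mathbb{F}[[t]]$ is the coefficient of $y^a$ when $G$ is viewed as a power series in $y$ over $\mathbb{F}[[t]]$. $\mathrm{Hom}_{\le d}$ of a power series in $t$ is its truncation to terms of degree at most $d$. *)

theory Defs
  imports "HOL-Computational_Algebra.Formal_Power_Series"
begin

text \<open>Bivariate power series F[[t,y]] are represented as F[[t]][[y]], i.e. the type
  'a fps fps: the outer variable is y, coefficients are power series in t.
  Hence [y^a](G) is simply G $ a.\<close>

text \<open>Hasse derivative of order i w.r.t. y: the coefficient of z^i in F(t,y+z).
  Since (y+z)^n = sum_i (n choose i) y^(n-i) z^i, its y^k coefficient is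
  ((k+i) choose i) * F_(k+i).\<close>
definition hasse_y :: "nat \<Rightarrow> 'a::comm_ring_1 fps fps \<Rightarrow> 'a fps fps" where
  "hasse_y i F = Abs_fps (\<lambda>k. of_nat ((k + i) choose i) * fps_nth F (k + i))"

definition hom_le :: "nat \<Rightarrow> 'a::zero fps \<Rightarrow> 'a fps" where
  "hom_le d f = Abs_fps (\<lambda>k. if k \<le> d then fps_nth f k else 0)"

text \<open>(A negative exponent, i.e. e(m+1) < 2, gives coefficient 0.) The m-th summand [y^(p^l (e(m+1)-2))]( H^(p^l)_y(P) / (e alpha^(m+1)) * (alpha y^(p^l e) - P)^m ).\<close>
definition A4_term :: "nat \<Rightarrow> nat \<Rightarrow> nat \<Rightarrow> 'a::field \<Rightarrow> 'a fps fps \<Rightarrow> nat \<Rightarrow> 'a fps" where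
  "A4_term p l e \<alpha> P m =
    (if e * (m + 1) < 2 then 0 else
     fps_nth (fps_const (fps_const (inverse (of_nat e * \<alpha> ^ (m + 1)))) * hasse_y (p ^ l) P
        * (fps_const (fps_const \<alpha>) * fps_X ^ (p ^ l * e) - P) ^ m) (p ^ l * (e * (m + 1) - 2)))"

end

theory Submission
  imports Defs
begin

text \<open>Put \<open>q = p\<^sup>l\<close>, \<open>c = \<phi>\<^sup>q\<close> and \<open>D = y\<^sup>q - c\<close>, so that \<open>P = D\<^sup>e Q\<close> by Frobenius. Since \<open>D\<close> is a
  series in \<open>y\<^sup>q\<close>, the Hasse derivative \<open>\<H>\<close> of order \<open>q\<close> obeys the Leibniz rule against it, so
  \<open>\<H> P = e D\<^sup>e\<^sup>-\<^sup>1 Q + D\<^sup>e \<H> Q\<close> with \<open>e\<close> a unit. Put \<open>R = \<alpha> y\<^sup>q\<^sup>e - P\<close>. Up to the factor \<open>e \<alpha>\<^sup>n\<close>, the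
  \<open>n\<close>-th partial sum is one \<open>y\<close>-coefficient of \<open>\<H> P \<cdot> S\<close>, where \<open>S\<close> is the geometric sum with
  \<open>P S = (\<alpha> y\<^sup>q\<^sup>e)\<^sup>n - R\<^sup>n\<close>. Dividing by \<open>D\<close> and unrolling the division coefficientwise extracts \<open>c\<close>
  from the single monomial of \<open>(\<alpha> y\<^sup>q\<^sup>e)\<^sup>n\<close>; all other terms involve \<open>R\<^sup>n\<close> or a high power of \<open>c\<close>.
  With \<open>y\<close> of weight 1 and \<open>t\<close> of weight 2, \<open>R\<close> has weight \<open>> q e\<close>, so these terms only affect
  \<open>t\<close>-degrees beyond \<open>d\<close> once \<open>n\<close> is large; the same estimate disposes of the summands with
  \<open>m > 2 e (d + q)\<close>.\<close>

unbundle fps_syntax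

section \<open>Frobenius and binomial coefficients in characteristic \<open>p\<close>\<close>

lemma freshmans_dream_diff':
  fixes x y :: "'b::comm_ring_1"
  assumes "prime CHAR('b)" and "m = CHAR('b) ^ n"
  shows "(x - y) ^ m = x ^ m - y ^ m"
  using freshmans_dream'[OF assms, of "x - y" y] by (simp add: eq_diff_eq)

lemma fps_X_plus_1_power_nth: "((fps_X + 1 :: 'b::comm_ring_1 fps) ^ n) $ k = of_nat (n choose k)"
proof -
  have "(fps_X + 1 :: 'b fps) ^ n = (\<Sum>j\<le>n. fps_const (of_nat (n choose j)) * fps_X ^ j)"
    by (simp add: binomial_ring fps_of_nat)
  thus ?thesis
    by (simp add: fps_sum_nth binomial_eq_0 if_distrib[of "\<lambda>x. _ * x"] sum.delta cong: if_cong)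
qed

definition supported_on_multiples :: "nat \<Rightarrow> 'b::zero fps \<Rightarrow> bool" where
  "supported_on_multiples q A \<longleftrightarrow> (\<forall>n. \<not> q dvd n \<longrightarrow> A $ n = 0)"

lemma supported_on_multiples_mult:
  fixes A B :: "'b::comm_semiring_0 fps"
  assumes "supported_on_multiples q A" and "supported_on_multiples q B"
  shows "supported_on_multiples q (A * B)"
  unfolding supported_on_multiples_def
proof (intro allI impI)
  fix n assume n: "\<not> q dvd n"
  have "A $ i * B $ (n - i) = 0" if "i \<le> n" for i
  proof (cases "q dvd i")
    case True
    with n that have "\<not> q dvd (n - i)" by (metis dvd_add le_add_diff_inverse)
    thus ?thesis using assms(2) by (simp add: supported_on_multiples_def)
  qed (use assms(1) in \<open>simp add: supported_on_multiples_def\<close>)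
  thus "(A * B) $ n = 0" by (simp add: fps_mult_nth)
qed

lemma supported_on_multiples_power:
  fixes A :: "'b::comm_semiring_1 fps"
  shows "supported_on_multiples q A \<Longrightarrow> supported_on_multiples q (A ^ n)"
proof (induction n)
  case 0
  show ?case by (simp add: supported_on_multiples_def)
next
  case (Suc n)
  thus ?case by (simp add: supported_on_multiples_mult)
qed

lemma supported_on_multiples_X_power_plus_const:
  "supported_on_multiples q (fps_X ^ q + fps_const c :: 'b::comm_ring_1 fps)"
  by (auto simp: supported_on_multiples_def)

lemma of_nat_choose_CHAR_power_mult_eq_0:
  assumes "prime CHAR('b::comm_ring_1)" and "q = CHAR('b) ^ l" and "0 < k" and "k < q"
  shows "(of_nat ((q * s) choose k) :: 'b) = 0"
proof -
  have "(fps_X + 1 :: 'b fps) ^ (q * s) = (fps_X ^ q + fps_const 1) ^ s"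
    using freshmans_dream'[where 'a="'b fps", of q l fps_X 1] assms(1,2) by (simp add: power_mult)
  moreover have "supported_on_multiples q ((fps_X ^ q + fps_const 1 :: 'b fps) ^ s)"
    by (intro supported_on_multiples_power supported_on_multiples_X_power_plus_const)
  moreover have "\<not> q dvd k" using assms(3,4) by (auto dest: dvd_imp_le)
  ultimately show ?thesis
    by (metis fps_X_plus_1_power_nth supported_on_multiples_def)
qed

lemma of_nat_choose_CHAR_power_split:
  assumes "prime CHAR('b::comm_ring_1)" and "q = CHAR('b) ^ l" and "q * s \<le> n"
  shows "(of_nat (n choose q) :: 'b) = of_nat ((q * s) choose q) + of_nat ((n - q * s) choose q)"
proof -
  have "(of_nat (n choose q) :: 'b) = (\<Sum>k\<le>q. of_nat ((q * s) choose k) * of_nat ((n - q * s) choose (q - k)))"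
    using vandermonde[of "q * s" "n - q * s" q] assms(3) by (simp flip: of_nat_mult of_nat_sum)
  also have "\<dots> = (\<Sum>k\<in>{0, q}. of_nat ((q * s) choose k) * of_nat ((n - q * s) choose (q - k)))"
    by (rule sum.mono_neutral_right) (auto simp: of_nat_choose_CHAR_power_mult_eq_0[OF assms(1,2)])
  also have "\<dots> = of_nat ((q * s) choose q) + of_nat ((n - q * s) choose q)"
    using assms(1,2) by (simp add: prime_gt_0_nat)
  finally show ?thesis .
qed

section \<open>The Hasse derivative of order \<open>p\<^sup>l\<close>\<close>

lemma hasse_y_nth: "hasse_y i F $ k = of_nat ((k + i) choose i) * F $ (k + i)"
  by (simp add: hasse_y_def)

lemma hasse_y_diff: "hasse_y i (F - G) = hasse_y i F - hasse_y i G"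
  by (simp add: fps_eq_iff hasse_y_nth algebra_simps)

lemma hasse_y_const: "i > 0 \<Longrightarrow> hasse_y i (fps_const c) = 0"
  by (simp add: fps_eq_iff hasse_y_nth)

lemma hasse_y_X_power: "hasse_y i (fps_X ^ i) = 1"
  by (simp add: fps_eq_iff hasse_y_nth)

lemma hasse_y_mult_supported:
  fixes A B :: "'b::comm_ring_1 fps fps"
  assumes "prime CHAR('b)" and "q = CHAR('b) ^ l" and "supported_on_multiples q A"
  shows "hasse_y q (A * B) = hasse_y q A * B + A * hasse_y q B"
proof (rule fps_ext)
  fix k
  define n where "n = k + q"
  have coeff: "(of_nat (i choose q) + of_nat ((n - i) choose q)) * (A $ i * B $ (n - i))
      = of_nat (n choose q) * (A $ i * B $ (n - i))" if "i \<le> n" for i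
  proof (cases "q dvd i")
    case True
    then obtain s where "i = q * s" by blast
    with that have "(of_nat (n choose q) :: 'b fps) = of_nat (i choose q) + of_nat ((n - i) choose q)"
      using of_nat_choose_CHAR_power_split[where 'b="'b fps", of q l s n] assms(1,2) by simp
    thus ?thesis by simp
  qed (use assms(3) in \<open>simp add: supported_on_multiples_def\<close>)
  have left: "(hasse_y q A * B) $ k = (\<Sum>i=0..n. of_nat (i choose q) * A $ i * B $ (n - i))"
  proof -
    have "(hasse_y q A * B) $ k = (\<Sum>i=0..k. of_nat ((i + q) choose q) * A $ (i + q) * B $ (n - (i + q)))"
      by (simp add: fps_mult_nth hasse_y_nth n_def)
    also have "\<dots> = (\<Sum>i=0+q..k+q. of_nat (i choose q) * A $ i * B $ (n - i))"
      by (rule sum.shift_bounds_cl_nat_ivl[symmetric])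
    also have "\<dots> = (\<Sum>i=0..n. of_nat (i choose q) * A $ i * B $ (n - i))"
      by (rule sum.mono_neutral_left) (auto simp: n_def binomial_eq_0)
    finally show ?thesis .
  qed
  have right: "(A * hasse_y q B) $ k = (\<Sum>i=0..n. of_nat ((n - i) choose q) * A $ i * B $ (n - i))"
  proof -
    have "(A * hasse_y q B) $ k = (\<Sum>i=0..k. of_nat ((n - i) choose q) * A $ i * B $ (n - i))"
      unfolding fps_mult_nth by (intro sum.cong) (auto simp: hasse_y_nth n_def)
    also have "\<dots> = (\<Sum>i=0..n. of_nat ((n - i) choose q) * A $ i * B $ (n - i))"
      by (rule sum.mono_neutral_left) (auto simp: n_def binomial_eq_0)
    finally show ?thesis .
  qed
  have "(hasse_y q A * B + A * hasse_y q B) $ k = (\<Sum>i=0..n. of_nat (n choose q) * (A $ i * B $ (n - i)))"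
    unfolding fps_add_nth left right sum.distrib[symmetric]
    by (intro sum.cong refl) (simp add: coeff[symmetric] distrib_right mult.assoc)
  also have "\<dots> = hasse_y q (A * B) $ k"
    by (simp add: hasse_y_nth fps_mult_nth n_def sum_distrib_left)
  finally show "hasse_y q (A * B) $ k = (hasse_y q A * B + A * hasse_y q B) $ k" ..
qed

lemma hasse_y_power_supported:
  fixes D :: "'b::comm_ring_1 fps fps"
  assumes "prime CHAR('b)" and "q = CHAR('b) ^ l" and "supported_on_multiples q D"
  shows "hasse_y q (D ^ n) = of_nat n * D ^ (n - 1) * hasse_y q D"
proof (induction n)
  case 0
  have "q > 0" using assms(1,2) by (simp add: prime_gt_0_nat)
  thus ?case using hasse_y_const[of q 1] by simp
next
  case (Suc n)
  have "hasse_y q (D ^ Suc n) = hasse_y q D * D ^ n + D * (of_nat n * D ^ (n - 1) * hasse_y q D)"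
    using hasse_y_mult_supported[OF assms] Suc.IH by simp
  also have "\<dots> = of_nat (Suc n) * D ^ n * hasse_y q D"
    by (cases n) (simp_all add: algebra_simps)
  finally show ?case by simp
qed

section \<open>Orders of vanishing\<close>

definition vanishes_below :: "nat \<Rightarrow> 'b::zero fps \<Rightarrow> bool" where
  "vanishes_below u f \<longleftrightarrow> (\<forall>k<u. f $ k = 0)"

lemma vanishes_below_mult:
  fixes f g :: "'b::comm_semiring_0 fps"
  assumes "vanishes_below u f" and "vanishes_below v g"
  shows "vanishes_below (u + v) (f * g)"
  unfolding vanishes_below_def
proof (intro allI impI)
  fix k assume k: "k < u + v"
  have "f $ i * g $ (k - i) = 0" if "i \<le> k" for i
    using assms that k by (cases "i < u") (auto simp: vanishes_below_def)
  thus "(f * g) $ k = 0" by (simp add: fps_mult_nth)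
qed

lemma vanishes_below_mono: "vanishes_below u f \<Longrightarrow> v \<le> u \<Longrightarrow> vanishes_below v f"
  by (simp add: vanishes_below_def)

lemma vanishes_below_mult_left:
  "vanishes_below u f \<Longrightarrow> vanishes_below u (g * f :: 'b::comm_semiring_0 fps)"
  using vanishes_below_mult[of 0 g u f] by (simp add: vanishes_below_def)

lemma vanishes_below_mult_right:
  "vanishes_below u f \<Longrightarrow> vanishes_below u (f * g :: 'b::comm_semiring_0 fps)"
  using vanishes_below_mult[of u f 0 g] by (simp add: vanishes_below_def)

lemma vanishes_below_diff:
  "vanishes_below u f \<Longrightarrow> vanishes_below u g \<Longrightarrow> vanishes_below u (f - g :: 'b::group_add fps)"
  by (simp add: vanishes_below_def)

lemma vanishes_below_sum:
  "(\<And>i. i \<in> A \<Longrightarrow> vanishes_below u (f i)) \<Longrightarrow> vanishes_below u (sum f A :: 'b::comm_monoid_add fps)"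
  by (simp add: vanishes_below_def fps_sum_nth)

lemma vanishes_below_power:
  "vanishes_below u f \<Longrightarrow> vanishes_below (n * u) (f ^ n :: 'b::comm_semiring_1 fps)"
proof (induction n)
  case (Suc n)
  thus ?case using vanishes_below_mult[of u f "n * u" "f ^ n"] by simp
qed (simp add: vanishes_below_def)

lemma vanishes_below_const_mult_cancel:
  fixes f :: "'b::{comm_semiring_0,semiring_no_zero_divisors} fps"
  shows "s \<noteq> 0 \<Longrightarrow> vanishes_below u (fps_const s * f) \<Longrightarrow> vanishes_below u f"
  by (simp add: vanishes_below_def)

lemma hom_le_eq_iff_vanishes_below:
  "hom_le d f = hom_le d g \<longleftrightarrow> vanishes_below (d + 1) (f - g :: 'b::group_add fps)"
  by (auto simp: hom_le_def vanishes_below_def fps_eq_iff)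

text \<open>\<open>t\<close> gets weight 2 so that \<open>\<phi>\<^sup>q\<close> has weight \<open>\<ge> 2 q\<close>, which makes \<open>(y\<^sup>q - \<phi>\<^sup>q)\<^sup>e - y\<^sup>q\<^sup>e\<close>
  of weight \<open>> q e\<close>.\<close>
definition weight_vanishes_below :: "nat \<Rightarrow> 'b::zero fps fps \<Rightarrow> bool" where
  "weight_vanishes_below w X \<longleftrightarrow> (\<forall>b a. b + 2 * a < w \<longrightarrow> X $ b $ a = 0)"

lemma weight_vanishes_below_mult:
  fixes X Y :: "'b::comm_semiring_0 fps fps"
  assumes "weight_vanishes_below u X" and "weight_vanishes_below v Y"
  shows "weight_vanishes_below (u + v) (X * Y)"
  unfolding weight_vanishes_below_def
proof (intro allI impI)
  fix b a assume ba: "b + 2 * a < u + v"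
  have "X $ i $ j * Y $ (b - i) $ (a - j) = 0" if "i \<le> b" "j \<le> a" for i j
    using assms that ba by (cases "i + 2 * j < u") (auto simp: weight_vanishes_below_def)
  thus "(X * Y) $ b $ a = 0" by (simp add: fps_mult_nth fps_sum_nth)
qed

lemma weight_vanishes_below_mono:
  "weight_vanishes_below u X \<Longrightarrow> v \<le> u \<Longrightarrow> weight_vanishes_below v X"
  by (simp add: weight_vanishes_below_def)

lemma weight_vanishes_below_mult_left:
  "weight_vanishes_below u X \<Longrightarrow> weight_vanishes_below u (Y * X :: 'b::comm_semiring_0 fps fps)"
  using weight_vanishes_below_mult[of 0 Y u X] by (simp add: weight_vanishes_below_def)

lemma weight_vanishes_below_add:
  "weight_vanishes_below u X \<Longrightarrow> weight_vanishes_below u Y \<Longrightarrow>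
    weight_vanishes_below u (X + Y :: 'b::monoid_add fps fps)"
  by (simp add: weight_vanishes_below_def)

lemma weight_vanishes_below_diff:
  "weight_vanishes_below u X \<Longrightarrow> weight_vanishes_below u Y \<Longrightarrow>
    weight_vanishes_below u (X - Y :: 'b::group_add fps fps)"
  by (simp add: weight_vanishes_below_def)

lemma weight_vanishes_below_sum:
  "(\<And>i. i \<in> A \<Longrightarrow> weight_vanishes_below u (f i)) \<Longrightarrow>
    weight_vanishes_below u (sum f A :: 'b::comm_monoid_add fps fps)"
  by (simp add: weight_vanishes_below_def fps_sum_nth)

lemma weight_vanishes_below_power:
  "weight_vanishes_below u X \<Longrightarrow> weight_vanishes_below (n * u) (X ^ n :: 'b::comm_semiring_1 fps fps)"
proof (induction n)
  case (Suc n)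
  thus ?case using weight_vanishes_below_mult[of u X "n * u" "X ^ n"] by simp
qed (simp add: weight_vanishes_below_def)

lemma weight_vanishes_below_X_power: "weight_vanishes_below n (fps_X ^ n :: 'b::comm_semiring_1 fps fps)"
  by (simp add: weight_vanishes_below_def)

lemma weight_vanishes_below_const:
  "vanishes_below u f \<Longrightarrow> weight_vanishes_below (2 * u) (fps_const f)"
  by (simp add: weight_vanishes_below_def vanishes_below_def)

lemma vanishes_below_coeff:
  "weight_vanishes_below w X \<Longrightarrow> n + 2 * u \<le> w \<Longrightarrow> vanishes_below u (X $ n)"
  by (simp add: weight_vanishes_below_def vanishes_below_def)

lemma coeff_quotient_X_power_minus_const:
  fixes V T :: "'b::comm_ring_1 fps"
  assumes "(fps_X ^ q - fps_const c) * V = T"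
  shows "V $ N = (\<Sum>j<r. c ^ j * T $ (N + q + j * q)) + c ^ r * V $ (N + r * q)"
proof (induction r)
  case (Suc r)
  have "V $ (N + r * q) = T $ (N + q + r * q) + c * V $ (N + Suc r * q)"
    unfolding assms[symmetric] by (simp add: algebra_simps fps_X_power_mult_right_nth)
  thus ?case using Suc.IH by (simp add: distrib_left mult.assoc mult.left_commute)
qed simp

section \<open>The expansion of \<open>\<phi>\<^sup>p\<^sup>^\<^sup>l\<close>\<close>

locale multiple_root =
  fixes P Q :: "'a::field fps fps" and \<phi> :: "'a fps" and p l e :: nat and \<alpha> :: 'a
  assumes CHAR_eq: "CHAR('a) = p" and p_pos: "p > 0"
    and P_eq: "P = (fps_X - fps_const \<phi>) ^ (p ^ l * e) * Q"
    and e_ge_1: "e \<ge> 1" and coprime_p_e: "coprime p e"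
    and \<phi>_0: "\<phi> $ 0 = 0"
    and Q_0_0: "Q $ 0 $ 0 = \<alpha>" and \<alpha>_nonzero: "\<alpha> \<noteq> 0"
begin

definition q :: nat where "q = p ^ l"
definition c :: "'a fps" where "c = \<phi> ^ q"
definition D :: "'a fps fps" where "D = fps_X ^ q - fps_const c"
definition L :: "'a fps fps" where "L = fps_const (fps_const \<alpha>) * fps_X ^ (q * e)"
definition R :: "'a fps fps" where "R = L - P"
definition H :: "'a fps fps" where "H = hasse_y q P"
definition geom :: "nat \<Rightarrow> 'a fps fps" where "geom n = (\<Sum>m<n. L ^ (n - Suc m) * R ^ m)"

lemma prime_CHAR: "prime CHAR('a)"
  using prime_CHAR_semidom[where 'a='a] CHAR_eq p_pos by simp

lemma q_eq: "q = CHAR('a) ^ l"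
  by (simp add: q_def CHAR_eq)

lemma q_pos: "q > 0"
  using prime_CHAR by (simp add: q_eq prime_gt_0_nat)

lemma of_nat_e_nonzero: "(of_nat e :: 'a) \<noteq> 0"
proof
  assume "(of_nat e :: 'a) = 0"
  hence "p dvd e" by (simp add: of_nat_eq_0_iff_char_dvd CHAR_eq)
  hence "is_unit p" using coprime_p_e by (metis coprime_common_divisor dvd_refl)
  thus False using prime_CHAR by (simp add: CHAR_eq)
qed

lemma P_eq_D_power: "P = D ^ e * Q"
proof -
  have "(fps_X - fps_const \<phi> :: 'a fps fps) ^ q = D"
    using freshmans_dream_diff'[where 'b="'a fps fps", of q l] prime_CHAR
    by (simp add: q_eq D_def c_def fps_const_power)
  thus ?thesis using P_eq by (simp add: power_mult q_def)
qed

lemma supported_D: "supported_on_multiples q D"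
  using supported_on_multiples_X_power_plus_const[of q "- c"] by (simp add: D_def flip: fps_const_neg)

lemma hasse_y_D: "hasse_y q D = 1"
  using q_pos by (simp add: D_def hasse_y_diff hasse_y_X_power hasse_y_const)

lemma H_eq: "H = of_nat e * D ^ (e - 1) * Q + D ^ e * hasse_y q Q"
  unfolding H_def
  by (subst P_eq_D_power) (simp add: hasse_y_mult_supported[OF prime_CHAR q_eq supported_on_multiples_power[OF supported_D]]
      hasse_y_power_supported[OF prime_CHAR q_eq supported_D] hasse_y_D)

lemma Q_right_invertible: "\<exists>Qi. Q * Qi = 1"
proof -
  have "inverse (Q $ 0) * Q $ 0 = 1"
    using Q_0_0 \<alpha>_nonzero by (simp add: inverse_mult_eq_1)
  moreover from this have "Q $ 0 * inverse (Q $ 0) = 1"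
    by (simp add: mult.commute)
  ultimately show ?thesis using fps_right_inverse' by blast
qed

lemma c_vanishes_below: "vanishes_below q c"
  using vanishes_below_power[of 1 \<phi> q] \<phi>_0 by (simp add: c_def vanishes_below_def)

lemma weight_D: "weight_vanishes_below q D"
  using weight_vanishes_below_const[OF c_vanishes_below] unfolding D_def
  by (intro weight_vanishes_below_diff weight_vanishes_below_X_power) (auto elim: weight_vanishes_below_mono)

lemma weight_X_power_minus_D_power: "weight_vanishes_below (q * e + 1) (fps_X ^ (q * e) - D ^ e)"
proof -
  have "(fps_X ^ q) ^ e - D ^ e = (fps_X ^ q - D) * (\<Sum>i<e. D ^ (e - Suc i) * (fps_X ^ q) ^ i)"
    by (rule power_diff_sumr2)
  hence "fps_X ^ (q * e) - D ^ e = fps_const c * (\<Sum>i<e. D ^ (e - Suc i) * (fps_X ^ q) ^ i)"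
    by (simp add: D_def power_mult)
  moreover have "weight_vanishes_below (2 * q + q * (e - 1))
      (fps_const c * (\<Sum>i<e. D ^ (e - Suc i) * (fps_X ^ q) ^ i))"
  proof (intro weight_vanishes_below_mult weight_vanishes_below_const c_vanishes_below
      weight_vanishes_below_sum)
    fix i assume "i \<in> {..<e}"
    hence "e - Suc i + i = e - 1" by simp
    hence "(e - Suc i) * q + i * q = q * (e - 1)" by (metis add_mult_distrib mult.commute)
    thus "weight_vanishes_below (q * (e - 1)) (D ^ (e - Suc i) * (fps_X ^ q) ^ i)"
      using weight_vanishes_below_mult[OF weight_vanishes_below_power[OF weight_D, of "e - Suc i"]
          weight_vanishes_below_power[OF weight_vanishes_below_X_power[of q], of i]] by simp
  qed
  ultimately show ?thesis
    using e_ge_1 q_pos by (auto elim!: weight_vanishes_below_mono simp: algebra_simps diff_mult_distrib2)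
qed

lemma weight_R: "weight_vanishes_below (q * e + 1) R"
proof -
  have "weight_vanishes_below (q * e + 1) ((fps_X ^ (q * e) - D ^ e) * Q)"
    using weight_vanishes_below_mult[OF weight_X_power_minus_D_power, of 0 Q]
    by (simp add: weight_vanishes_below_def)
  moreover have "weight_vanishes_below 1 (fps_const (fps_const \<alpha>) - Q)"
    using Q_0_0 by (simp add: weight_vanishes_below_def)
  hence "weight_vanishes_below (q * e + 1) ((fps_const (fps_const \<alpha>) - Q) * fps_X ^ (q * e))"
    using weight_vanishes_below_mult[OF _ weight_vanishes_below_X_power, of 1 _ "q * e"]
    by (simp add: add.commute)
  moreover have "R = (fps_const (fps_const \<alpha>) - Q) * fps_X ^ (q * e) + (fps_X ^ (q * e) - D ^ e) * Q"
    unfolding R_def L_def by (subst P_eq_D_power) (simp add: algebra_simps)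
  ultimately show ?thesis by (simp add: weight_vanishes_below_add)
qed

lemma L_power: "L ^ k = fps_const (fps_const (\<alpha> ^ k)) * fps_X ^ (q * e * k)"
  by (simp add: L_def power_mult_distrib flip: power_mult)

lemma A4_term_eq:
  "A4_term p l e \<alpha> P m = (if e * (m + 1) < 2 then 0 else
     fps_const (inverse (of_nat e * \<alpha> ^ (m + 1))) * (H * R ^ m) $ (q * (e * (m + 1) - 2)))"
  by (simp add: A4_term_def H_def R_def L_def q_def mult.assoc)

text \<open>The factor \<open>y\<^sup>2\<^sup>q\<close> removes the truncated subtraction in the exponent \<open>q (e (m + 1) - 2)\<close>; it
  also covers the summand \<open>e = 1, m = 0\<close>, whose exponent would be negative and which is \<open>0\<close>.\<close>
lemma A4_term_scaled:
  "fps_const (of_nat e * \<alpha> ^ (m + 1)) * A4_term p l e \<alpha> P m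
     = (fps_X ^ (2 * q) * (H * R ^ m)) $ (q * e * (m + 1))"
proof (cases "e * (m + 1) < 2")
  case True
  hence "q * (e * (m + 1)) < q * 2"
    using q_pos by simp
  hence "q * e * (m + 1) < 2 * q"
    by (simp only: mult.assoc mult.commute[of 2 q])
  thus ?thesis using True by (simp add: A4_term_eq fps_X_power_mult_nth)
next
  case False
  have nz: "of_nat e * \<alpha> ^ (m + 1) \<noteq> 0"
    using of_nat_e_nonzero \<alpha>_nonzero by simp
  have "q * (e * (m + 1)) \<ge> q * 2"
    using False by simp
  hence "\<not> q * e * (m + 1) < 2 * q" and "q * e * (m + 1) - 2 * q = q * (e * (m + 1) - 2)"
    by (simp_all only: mult.assoc mult.commute[of 2 q] not_less diff_mult_distrib2)
  hence "(fps_X ^ (2 * q) * (H * R ^ m)) $ (q * e * (m + 1)) = (H * R ^ m) $ (q * (e * (m + 1) - 2))"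
    by (simp only: fps_X_power_mult_nth if_False)
  also have "\<dots> = (fps_const (of_nat e * \<alpha> ^ (m + 1)) * fps_const (inverse (of_nat e * \<alpha> ^ (m + 1))))
      * (H * R ^ m) $ (q * (e * (m + 1) - 2))"
    by (simp only: fps_const_mult right_inverse[OF nz] fps_const_1_eq_1 mult_1)
  finally show ?thesis
    using False by (simp add: A4_term_eq mult.assoc)
qed

lemma P_mult_geom: "P * geom n = L ^ n - R ^ n"
proof -
  have "R ^ n - L ^ n = (R - L) * geom n"
    unfolding geom_def by (rule power_diff_sumr2)
  thus ?thesis by (simp add: R_def algebra_simps)
qed

lemma partial_sum_scaled:
  "fps_const (of_nat e * \<alpha> ^ n) * (\<Sum>m<n. A4_term p l e \<alpha> P m)
     = (fps_X ^ (2 * q) * (H * geom n)) $ (q * e * n)"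
proof -
  have "(fps_X ^ (2 * q) * (H * (L ^ (n - Suc m) * R ^ m))) $ (q * e * n)
      = fps_const (of_nat e * \<alpha> ^ n) * A4_term p l e \<alpha> P m" if "m < n" for m
  proof -
    from that have "n = (n - Suc m) + (m + 1)" by simp
    hence idx: "q * e * n = q * e * (n - Suc m) + q * e * (m + 1)"
      by (metis add_mult_distrib2)
    have "fps_X ^ (2 * q) * (H * (L ^ (n - Suc m) * R ^ m))
        = fps_const (fps_const (\<alpha> ^ (n - Suc m))) * (fps_X ^ (q * e * (n - Suc m)) * (fps_X ^ (2 * q) * (H * R ^ m)))"
      by (simp add: L_power ac_simps)
    hence "(fps_X ^ (2 * q) * (H * (L ^ (n - Suc m) * R ^ m))) $ (q * e * n)
        = fps_const (\<alpha> ^ (n - Suc m)) * (fps_X ^ (2 * q) * (H * R ^ m)) $ (q * e * (m + 1))"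
      unfolding idx by (simp only: fps_mult_left_const_nth fps_X_power_mult_nth) simp
    also have "\<dots> = fps_const (\<alpha> ^ (n - Suc m)) * (fps_const (of_nat e * \<alpha> ^ (m + 1)) * A4_term p l e \<alpha> P m)"
      by (simp only: A4_term_scaled)
    also have "\<dots> = fps_const (\<alpha> ^ (n - Suc m) * (of_nat e * \<alpha> ^ (m + 1))) * A4_term p l e \<alpha> P m"
      by (simp only: mult.assoc[symmetric] fps_const_mult)
    also have "\<alpha> ^ (n - Suc m) * (of_nat e * \<alpha> ^ (m + 1)) = of_nat e * \<alpha> ^ n"
      using power_add[of \<alpha> "n - Suc m" "m + 1"] that by (simp add: mult.left_commute)
    finally show ?thesis .
  qed
  thus ?thesis by (simp add: geom_def sum_distrib_left fps_sum_nth)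
qed

lemma H_mult_geom:
  assumes "Q * Qi = 1"
  shows "H * geom n = of_nat e * (D ^ (e - 1) * Q * geom n) + hasse_y q Q * Qi * (L ^ n - R ^ n)"
proof -
  have "D ^ e * hasse_y q Q * geom n = hasse_y q Q * Qi * (D ^ e * Q * geom n)"
    using assms by (simp add: ac_simps)
  also have "D ^ e * Q * geom n = L ^ n - R ^ n"
    using P_mult_geom by (simp add: P_eq_D_power)
  finally show ?thesis by (simp add: H_eq algebra_simps)
qed

lemma partial_sum_minus_c_scaled:
  assumes Qi: "Q * Qi = 1" and N: "N + 2 * q = q * e * n"
  shows "fps_const (of_nat e * \<alpha> ^ n) * ((\<Sum>m<n. A4_term p l e \<alpha> P m) - c)
     = of_nat e * (c ^ (d + 2) * (D ^ (e - 1) * Q * geom n) $ (N + (d + 2) * q)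
                   - (\<Sum>j<d + 2. c ^ j * (R ^ n) $ (N + q + j * q)))
       - (hasse_y q Q * Qi * R ^ n) $ N"
proof -
  define V where "V = D ^ (e - 1) * Q * geom n"
  define G where "G = hasse_y q Q * Qi"
  have "D * V = L ^ n - R ^ n"
    using P_mult_geom e_ge_1 by (simp add: V_def P_eq_D_power mult.assoc power_eq_if)
  hence "V $ N = (\<Sum>j<d + 2. c ^ j * (L ^ n - R ^ n) $ (N + q + j * q)) + c ^ (d + 2) * V $ (N + (d + 2) * q)"
    unfolding D_def by (rule coeff_quotient_X_power_minus_const)
  moreover have "(L ^ n) $ (N + q + j * q) = (if j = 1 then fps_const (\<alpha> ^ n) else 0)" for j
  proof -
    have "N + q + j * q = q * e * n \<longleftrightarrow> j * q = 1 * q"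
      unfolding N[symmetric] by simp
    also have "\<dots> \<longleftrightarrow> j = 1"
      using q_pos by (simp only: mult_cancel2) simp
    finally show ?thesis by (simp add: L_power)
  qed
  ultimately have V_N: "V $ N = c * fps_const (\<alpha> ^ n) + c ^ (d + 2) * V $ (N + (d + 2) * q)
      - (\<Sum>j<d + 2. c ^ j * (R ^ n) $ (N + q + j * q))"
    by (simp add: right_diff_distrib sum_subtractf if_distrib[of "\<lambda>x. _ * x"] sum.delta cong: if_cong)
  have "(G * L ^ n) $ N = 0"
    using N q_pos by (simp add: L_power fps_X_power_mult_right_nth mult.left_commute[of G])
  hence "(H * geom n) $ N = of_nat e * V $ N - (G * R ^ n) $ N"
    by (simp add: H_mult_geom[OF Qi] V_def G_def right_diff_distrib fps_of_nat[symmetric])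
  moreover have "fps_const (of_nat e * \<alpha> ^ n) * (\<Sum>m<n. A4_term p l e \<alpha> P m) = (H * geom n) $ N"
    unfolding partial_sum_scaled N[symmetric] by (simp add: fps_X_power_mult_nth)
  ultimately show ?thesis
    unfolding V_N V_def[symmetric] G_def[symmetric] by (simp add: algebra_simps flip: fps_of_nat)
qed

lemma partial_sum_approx:
  assumes n: "d * q + 2 * d + 2 \<le> n"
  shows "vanishes_below (d + 1) ((\<Sum>m<n. A4_term p l e \<alpha> P m) - c)"
proof -
  obtain Qi where Qi: "Q * Qi = 1"
    using Q_right_invertible by blast
  have "1 * 2 \<le> e * n"
    using n e_ge_1 by (intro mult_le_mono) simp_all
  hence "2 * q \<le> q * e * n"
    by (simp add: mult.commute mult.left_commute)
  then obtain N where N: "N + 2 * q = q * e * n"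
    using le_add_diff_inverse2 by blast
  have R_n: "weight_vanishes_below (q * e * n + n) (R ^ n)"
    using weight_vanishes_below_power[OF weight_R, of n] by (simp add: algebra_simps)
  have far: "vanishes_below (d + 1) (c ^ (d + 2) * (D ^ (e - 1) * Q * geom n) $ (N + (d + 2) * q))"
  proof (rule vanishes_below_mult_right, rule vanishes_below_mono)
    show "vanishes_below ((d + 2) * q) (c ^ (d + 2))"
      by (rule vanishes_below_power[OF c_vanishes_below])
    have "(d + 2) * 1 \<le> (d + 2) * q"
      using q_pos by (intro mult_le_mono2) simp
    thus "d + 1 \<le> (d + 2) * q" by simp
  qed
  have near: "vanishes_below (d + 1) (\<Sum>j<d + 2. c ^ j * (R ^ n) $ (N + q + j * q))"
  proof (intro vanishes_below_sum vanishes_below_mult_left vanishes_below_coeff[OF R_n])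
    fix j assume "j \<in> {..<d + 2}"
    hence "j * q \<le> (d + 1) * q" by (intro mult_le_mono1) simp
    moreover have "(d + 1) * q = d * q + q" by simp
    ultimately show "N + q + j * q + 2 * (d + 1) \<le> q * e * n + n"
      using N n by arith
  qed
  have rest: "vanishes_below (d + 1) ((hasse_y q Q * Qi * R ^ n) $ N)"
    using N n by (intro vanishes_below_coeff[OF weight_vanishes_below_mult_left[OF R_n]]) arith
  have "vanishes_below (d + 1) (fps_const (of_nat e * \<alpha> ^ n) * ((\<Sum>m<n. A4_term p l e \<alpha> P m) - c))"
    unfolding partial_sum_minus_c_scaled[OF Qi N, of d]
    by (rule vanishes_below_diff[OF vanishes_below_mult_left[OF vanishes_below_diff[OF far near]] rest])
  thus ?thesis
    using of_nat_e_nonzero \<alpha>_nonzero by (auto elim: vanishes_below_const_mult_cancel[rotated])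
qed

lemma A4_term_tail:
  assumes "2 * e * (d + q) < m"
  shows "vanishes_below (d + 1) (A4_term p l e \<alpha> P m)"
proof -
  have "weight_vanishes_below (2 * q + m * (q * e + 1)) (fps_X ^ (2 * q) * (H * R ^ m))"
    by (rule weight_vanishes_below_mult[OF weight_vanishes_below_X_power
          weight_vanishes_below_mult_left[OF weight_vanishes_below_power[OF weight_R]]])
  moreover have "q * e * (m + 1) + 2 * (d + 1) \<le> 2 * q + m * (q * e + 1)"
  proof -
    have "d \<le> d * e" using e_ge_1 by simp
    moreover have "2 * e * (d + q) = 2 * (d * e) + 2 * (q * e)" by (simp add: algebra_simps)
    ultimately have "q * e + 2 * d + 2 \<le> 2 * q + m"
      using assms q_pos by linarith
    thus ?thesis by (simp add: algebra_simps)
  qed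
  ultimately have "vanishes_below (d + 1) (fps_const (of_nat e * \<alpha> ^ (m + 1)) * A4_term p l e \<alpha> P m)"
    unfolding A4_term_scaled by (rule vanishes_below_coeff)
  thus ?thesis
    using of_nat_e_nonzero \<alpha>_nonzero by (auto elim: vanishes_below_const_mult_cancel[rotated])
qed

lemma A4_sums: "(\<lambda>m. A4_term p l e \<alpha> P m) sums (\<phi> ^ (p ^ l))"
  unfolding sums_def
proof (rule tendsto_fpsI)
  fix k
  have "(\<Sum>m<n. A4_term p l e \<alpha> P m) $ k = c $ k" if "k * q + 2 * k + 2 \<le> n" for n
    using partial_sum_approx[OF that] by (simp add: vanishes_below_def)
  thus "\<forall>\<^sub>F n in sequentially. (\<Sum>m<n. A4_term p l e \<alpha> P m) $ k = (\<phi> ^ p ^ l) $ k"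
    unfolding eventually_sequentially c_def q_def by blast
qed

lemma A4_hom_le: "hom_le d (\<phi> ^ (p ^ l)) = hom_le d (\<Sum>m\<le>2 * e * (d + p ^ l). A4_term p l e \<alpha> P m)"
proof -
  define K where "K = 2 * e * (d + q)"
  define n where "n = Suc K + d * q + 2 * d + 2"
  have "(\<Sum>m<n. A4_term p l e \<alpha> P m) = (\<Sum>m\<le>K. A4_term p l e \<alpha> P m) + (\<Sum>m=Suc K..<n. A4_term p l e \<alpha> P m)"
  proof -
    have "{..<n} = {..K} \<union> {Suc K..<n}" by (auto simp: n_def)
    moreover have "{..K} \<inter> {Suc K..<n} = {}" by auto
    ultimately show ?thesis by (simp only: sum.union_disjoint finite_atMost finite_atLeastLessThan)
  qed
  moreover have "vanishes_below (d + 1) (\<Sum>m=Suc K..<n. A4_term p l e \<alpha> P m)"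
    by (intro vanishes_below_sum A4_term_tail) (auto simp: K_def)
  moreover have "vanishes_below (d + 1) ((\<Sum>m<n. A4_term p l e \<alpha> P m) - c)"
    by (rule partial_sum_approx) (simp add: n_def)
  ultimately have "vanishes_below (d + 1) (c - (\<Sum>m\<le>K. A4_term p l e \<alpha> P m))"
    by (simp add: vanishes_below_def algebra_simps)
  thus ?thesis
    by (simp add: hom_le_eq_iff_vanishes_below K_def c_def q_def)
qed

end

theorem corollaryA4:
  fixes P Q :: "'a::field fps fps" and \<phi> :: "'a fps" and p l e :: nat and \<alpha> :: 'a
  assumes "CHAR('a) = p" and "p > 0"
    and "P = (fps_X - fps_const \<phi>) ^ (p ^ l * e) * Q"
    and "e \<ge> 1" and "coprime p e"
    and "fps_nth \<phi> 0 = 0"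
    and "fps_nth (fps_nth Q 0) 0 = \<alpha>" and "\<alpha> \<noteq> 0"
  shows "(\<lambda>m. A4_term p l e \<alpha> P m) sums (\<phi> ^ (p ^ l))
         \<and> (\<forall>d. hom_le d (\<phi> ^ (p ^ l)) =
               hom_le d (\<Sum>m\<le>2 * e * (d + p ^ l). A4_term p l e \<alpha> P m))"
proof -
  interpret multiple_root P Q \<phi> p l e \<alpha>
    using assms by unfold_locales
  show ?thesis using A4_sums A4_hom_le by blast
qed

end
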